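(* Let $\zeta\in\overline{\mathbb D}$ and $f\in\mathcal D_\zeta$, $f(z)=\sum_{k=0}^\infty a_kz^k$. Then $\sum_{k=0}^\infty a_k\zeta^k$ converges, and, setting $$f_n(z):=\sum_{k=0}^{n-1}a_kz^k+\Bigl(\sum_{k=n}^\infty a_k\zeta^{k-n}\Bigr)z^n,$$ we have $\mathcal D_\zeta(f-f_n)\to0$ as $n\to\infty$.
   Context: $\mathbb D$ is the open unit disk, $\mathrm{Hol}(\mathbb D)$ the holomorphic functions on $\mathbb D$, and $H^2$ the Hardy space with $\|\sum b_kz^k\|_{H^2}^2=\sum|b_k|^2$. For $\zeta\in\overline{\mathbb D}$, $\mathcal D_\zeta$ is the set of $f\in\mathrm{Hol}(\mathbb D)$ of the form $f(z)=a+(z-\zeta)g(z)$ with $g\in H^2$, $a\in\mathbb C$; for such $f$ set $\mathcal D_\zeta(f):=\|g\|_{H^2}^2$, and set $\mathcal D_\zeta(f):=\infty$ if $f\notin\mathcal D_\zeta$. *)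

theory Defs
  imports "HOL-Complex_Analysis.Complex_Analysis"
begin

definition taylor_coeff :: "(complex \<Rightarrow> complex) \<Rightarrow> nat \<Rightarrow> complex" where
  "taylor_coeff g k = (deriv ^^ k) g 0 / of_nat (fact k)"

definition in_H2 :: "(complex \<Rightarrow> complex) \<Rightarrow> bool" where
  "in_H2 g \<longleftrightarrow> g holomorphic_on ball 0 1 \<and> summable (\<lambda>k. (norm (taylor_coeff g k))\<^sup>2)"

definition H2_normsq :: "(complex \<Rightarrow> complex) \<Rightarrow> real" where
  "H2_normsq g = (\<Sum>k. (norm (taylor_coeff g k))\<^sup>2)"

definition D_space :: "complex \<Rightarrow> (complex \<Rightarrow> complex) set" where
  "D_space \<zeta> = {f. f holomorphic_on ball 0 1 \<and>
      (\<exists>a g. in_H2 g \<and> (\<forall>z\<in>ball 0 1. f z = a + (z - \<zeta>) * g z))}"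

text \<open>Local Dirichlet integral D_zeta(f) = ||g||^2; infinity if f is not in D_zeta
  (the representation is unique, so the infimum is just ||g||^2; Inf of the empty set is infinity).\<close>
definition D_int :: "complex \<Rightarrow> (complex \<Rightarrow> complex) \<Rightarrow> ennreal" where
  "D_int \<zeta> f = (if f \<in> D_space \<zeta> then
      Inf {ennreal (H2_normsq g) | g. in_H2 g \<and>
            (\<exists>a. \<forall>z\<in>ball 0 1. f z = a + (z - \<zeta>) * g z)}
    else \<infinity>)"

end

theory Submission
  imports Defs
begin

text \<open>Write f = a + (z - \<zeta>) g with g = \<Sum> b_k z^k in H^2 and set T_0 = a, T_(k+1) = b_k.
  Then a_k = T_k - \<zeta> T_(k+1), so the tail sum \<Sum>_(k\<ge>n) a_k \<zeta>^(k-n) telescopes to T_n, because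
  T_k \<rightarrow> 0 and |\<zeta>| \<le> 1. Consequently f - f_n = (z - \<zeta>) h_n with h_n = g - \<Sum>_(k<n) b_k z^k,
  and D_\<zeta>(f - f_n) \<le> \<parallel>h_n\<parallel>^2 = \<Sum>_(k\<ge>n) |b_k|^2 \<rightarrow> 0.\<close>

lemma taylor_coeff_eq_fps_nth:
  "f has_fps_expansion F \<Longrightarrow> taylor_coeff f k = fps_nth F k"
  by (simp add: taylor_coeff_def fps_nth_fps_expansion)

lemma has_fps_expansion_fps_expansion_ball:
  "g holomorphic_on ball 0 1 \<Longrightarrow> g has_fps_expansion fps_expansion g 0"
  by (rule has_fps_expansion_fps_expansion[of "ball 0 1"]) auto

lemma taylor_coeff_affine_mult:
  assumes hol: "g holomorphic_on ball 0 1"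
    and rep: "\<forall>z\<in>ball 0 1. f z = a + (z - \<zeta>) * g z"
  shows "taylor_coeff f n = case_nat a (taylor_coeff g) n - \<zeta> * taylor_coeff g n"
proof -
  define G where "G = fps_expansion g 0"
  have g_exp: "g has_fps_expansion G"
    unfolding G_def using hol by (rule has_fps_expansion_fps_expansion_ball)
  have "eventually (\<lambda>z. z \<in> ball 0 1) (nhds (0::complex))"
    by (intro eventually_nhds_in_open) auto
  then have "eventually (\<lambda>z. a + z * g z - \<zeta> * g z = f z) (nhds 0)"
    by eventually_elim (simp add: rep algebra_simps)
  moreover have "(\<lambda>z. a + z * g z - \<zeta> * g z) has_fps_expansion fps_const a + fps_X * G - fps_const \<zeta> * G"
    by (intro fps_expansion_intros g_exp)
  ultimately have f_exp: "f has_fps_expansion fps_const a + fps_X * G - fps_const \<zeta> * G"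
    by (metis has_fps_expansion_cong)
  show ?thesis
    unfolding taylor_coeff_eq_fps_nth[OF f_exp] taylor_coeff_eq_fps_nth[OF g_exp]
    by (simp split: nat.split)
qed

lemma taylor_coeff_tendsto_zero:
  assumes "in_H2 g"
  shows "taylor_coeff g \<longlonglongrightarrow> 0"
proof -
  have "(\<lambda>k. (norm (taylor_coeff g k))\<^sup>2) \<longlonglongrightarrow> 0"
    using assms by (intro summable_LIMSEQ_zero) (simp add: in_H2_def)
  then have "(\<lambda>k. sqrt ((norm (taylor_coeff g k))\<^sup>2)) \<longlonglongrightarrow> sqrt 0"
    by (intro tendsto_intros)
  then show ?thesis
    by (simp add: tendsto_norm_zero_iff)
qed

lemma telescoping_sums_of_tendsto_zero:
  fixes T :: "nat \<Rightarrow> 'a::real_normed_field"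
  assumes "T \<longlonglongrightarrow> 0" and "norm \<zeta> \<le> 1"
  shows "(\<lambda>k. (T (k + n) - \<zeta> * T (Suc (k + n))) * \<zeta> ^ k) sums T n"
proof -
  have partial_sums: "(\<Sum>k<m. (T (k + n) - \<zeta> * T (Suc (k + n))) * \<zeta> ^ k) = T n - T (m + n) * \<zeta> ^ m"
    for m by (induction m) (simp_all add: algebra_simps)
  have "(\<lambda>m. T (m + n) * \<zeta> ^ m) \<longlonglongrightarrow> 0"
  proof (rule Lim_null_comparison)
    show "\<forall>\<^sub>F m in sequentially. norm (T (m + n) * \<zeta> ^ m) \<le> norm (T (m + n))"
      using assms(2) by (intro always_eventually allI)
        (auto simp: norm_mult norm_power intro!: mult_left_le power_le_one)
    show "(\<lambda>m. norm (T (m + n))) \<longlonglongrightarrow> 0"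
      using LIMSEQ_ignore_initial_segment[OF assms(1)] by (simp add: tendsto_norm_zero)
  qed
  then have "(\<lambda>m. T n - T (m + n) * \<zeta> ^ m) \<longlonglongrightarrow> T n - 0"
    by (intro tendsto_intros)
  then show ?thesis
    by (simp add: sums_def partial_sums)
qed

lemma sum_telescoping_factor:
  fixes T :: "nat \<Rightarrow> 'a::comm_ring_1"
  shows "(\<Sum>k<n. (T k - c * T (Suc k)) * z ^ k) + T n * z ^ n
           = T 0 + (z - c) * (\<Sum>k<n. T (Suc k) * z ^ k)"
  by (induction n) (simp_all add: algebra_simps)

lemma taylor_coeff_minus_taylor_poly:
  assumes "g holomorphic_on ball 0 1"
  shows "taylor_coeff (\<lambda>z. g z - (\<Sum>j<n. taylor_coeff g j * z ^ j)) k
           = (if k < n then 0 else taylor_coeff g k)"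
proof -
  define G where "G = fps_expansion g 0"
  have g_exp: "g has_fps_expansion G"
    unfolding G_def using assms by (rule has_fps_expansion_fps_expansion_ball)
  have h_exp: "(\<lambda>z. g z - (\<Sum>j<n. taylor_coeff g j * z ^ j))
          has_fps_expansion G - (\<Sum>j<n. fps_const (taylor_coeff g j) * fps_X ^ j)"
    by (intro fps_expansion_intros g_exp)
  show ?thesis
    unfolding taylor_coeff_eq_fps_nth[OF h_exp]
    by (auto simp: taylor_coeff_eq_fps_nth[OF g_exp] fps_sum_nth fps_X_power_iff if_distrib cong: if_cong)
qed

lemma in_H2_minus_taylor_poly:
  assumes "in_H2 g"
  shows "in_H2 (\<lambda>z. g z - (\<Sum>j<n. taylor_coeff g j * z ^ j))"
proof -
  have hol: "g holomorphic_on ball 0 1" and summ: "summable (\<lambda>k. (norm (taylor_coeff g k))\<^sup>2)"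
    using assms by (auto simp: in_H2_def)
  have "summable (\<lambda>k. (norm (taylor_coeff (\<lambda>z. g z - (\<Sum>j<n. taylor_coeff g j * z ^ j)) k))\<^sup>2)"
    by (rule summable_comparison_test'[OF summ]) (simp add: taylor_coeff_minus_taylor_poly[OF hol])
  with hol show ?thesis
    by (auto simp: in_H2_def intro!: holomorphic_intros)
qed

lemma H2_normsq_minus_taylor_poly_tendsto_zero:
  assumes "in_H2 g"
  shows "(\<lambda>n. H2_normsq (\<lambda>z. g z - (\<Sum>j<n. taylor_coeff g j * z ^ j))) \<longlonglongrightarrow> 0"
proof -
  have hol: "g holomorphic_on ball 0 1" and summ: "summable (\<lambda>k. (norm (taylor_coeff g k))\<^sup>2)"
    using assms by (auto simp: in_H2_def)
  have "H2_normsq (\<lambda>z. g z - (\<Sum>j<n. taylor_coeff g j * z ^ j))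
          = (\<Sum>k. (norm (taylor_coeff g (k + n)))\<^sup>2)" for n
  proof -
    have "summable (\<lambda>k. (norm (taylor_coeff (\<lambda>z. g z - (\<Sum>j<n. taylor_coeff g j * z ^ j)) k))\<^sup>2)"
      using in_H2_minus_taylor_poly[OF assms] by (simp add: in_H2_def)
    from suminf_split_initial_segment[OF this, of n] show ?thesis
      by (simp add: H2_normsq_def taylor_coeff_minus_taylor_poly[OF hol])
  qed
  then show ?thesis
    using suminf_exist_split2[OF summ] by simp
qed

lemma D_int_le_H2_normsq:
  assumes "in_H2 g" and rep: "\<forall>z\<in>ball 0 1. f z = a + (z - \<zeta>) * g z"
  shows "D_int \<zeta> f \<le> ennreal (H2_normsq g)"
proof -
  have "(\<lambda>z. a + (z - \<zeta>) * g z) holomorphic_on ball 0 1"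
    using assms(1) by (auto simp: in_H2_def intro!: holomorphic_intros)
  then have "f holomorphic_on ball 0 1"
    using holomorphic_cong[of "ball 0 1" _ f "\<lambda>z. a + (z - \<zeta>) * g z"] rep by auto
  then have "f \<in> D_space \<zeta>"
    unfolding D_space_def using assms by blast
  then show ?thesis
    unfolding D_int_def using assms by (auto intro!: Inf_lower)
qed

theorem corollary2p3:
  fixes \<zeta> :: complex and f :: "complex \<Rightarrow> complex"
  assumes "norm \<zeta> \<le> 1"
    and "f \<in> D_space \<zeta>"
  shows "summable (\<lambda>k. taylor_coeff f k * \<zeta> ^ k) \<and>
         (\<lambda>n. D_int \<zeta> (\<lambda>z. f z -
            ((\<Sum>k<n. taylor_coeff f k * z ^ k)
             + (\<Sum>k. taylor_coeff f (k + n) * \<zeta> ^ k) * z ^ n)))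
         \<longlonglongrightarrow> 0"
proof -
  from assms(2) obtain a g where g: "in_H2 g" and rep: "\<forall>z\<in>ball 0 1. f z = a + (z - \<zeta>) * g z"
    unfolding D_space_def by blast
  define T where "T = case_nat a (taylor_coeff g)"
  define h where "h n z = g z - (\<Sum>j<n. taylor_coeff g j * z ^ j)" for n z
  define R where "R n z = f z - ((\<Sum>k<n. taylor_coeff f k * z ^ k)
                        + (\<Sum>k. taylor_coeff f (k + n) * \<zeta> ^ k) * z ^ n)" for n z
  have coeff: "taylor_coeff f k = T k - \<zeta> * T (Suc k)" for k
    using taylor_coeff_affine_mult[OF _ rep] g by (simp add: T_def in_H2_def)
  have "T \<longlonglongrightarrow> 0"
    unfolding T_def by (rule LIMSEQ_imp_Suc) (simp add: taylor_coeff_tendsto_zero[OF g])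
  from telescoping_sums_of_tendsto_zero[OF this assms(1)]
  have tails: "(\<lambda>k. taylor_coeff f (k + n) * \<zeta> ^ k) sums T n" for n
    by (simp add: coeff)
  have "R n z = 0 + (z - \<zeta>) * h n z" if "z \<in> ball 0 1" for n z
  proof -
    have "(\<Sum>k<n. taylor_coeff f k * z ^ k) + (\<Sum>k. taylor_coeff f (k + n) * \<zeta> ^ k) * z ^ n
            = a + (z - \<zeta>) * (\<Sum>j<n. taylor_coeff g j * z ^ j)"
      using sum_telescoping_factor[of T \<zeta> z n] sums_unique[OF tails[of n]]
      by (simp add: coeff T_def)
    with rep that show ?thesis
      by (simp add: R_def h_def right_diff_distrib)
  qed
  then have bound: "D_int \<zeta> (R n) \<le> ennreal (H2_normsq (h n))" for n
    by (intro D_int_le_H2_normsq) (auto simp: h_def[abs_def] in_H2_minus_taylor_poly g)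
  have "(\<lambda>n. ennreal (H2_normsq (h n))) \<longlonglongrightarrow> 0"
    using tendsto_ennrealI[OF H2_normsq_minus_taylor_poly_tendsto_zero[OF g]]
    by (simp add: h_def[abs_def])
  then have "(\<lambda>n. D_int \<zeta> (R n)) \<longlonglongrightarrow> 0"
    by (rule tendsto_sandwich[OF _ _ tendsto_const, rotated 2]) (auto intro: always_eventually bound)
  with sums_summable[OF tails[of 0]] show ?thesis
    by (simp add: R_def[abs_def])
qed

end
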